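(* For every backward trie $\mathsf{T}_b$ with $n$ nodes, $\mathsf{CDAWG}(\mathsf{T}_b)$ has at most $2n-3$ nodes and at most $2n-4$ edges, independently of the alphabet size.
   Context: An alphabet $\Sigma$ is a finite ordered set of characters. A forward trie $\mathsf{T}_f$ is a rooted tree with $n$ nodes in which every edge is directed from parent to child and labeled by a single character of $\Sigma$, such that the edges leaving any node carry pairwise distinct labels. The backward trie $\mathsf{T}_b$ is obtained from $\mathsf{T}_f$ by reversing the direction of every edge while keeping its label; it has the same nodes and root $r$. For nodes $u,v$ with $u$ an ancestor of $v$ (possibly $u=v$), $\mathrm{str}_b(v,u)$ is the string of labels read along the reversed (upward) path from $v$ to $u$. Define $\mathrm{Substr}(\mathsf{T}_b)=\{\mathrm{str}_b(v,u): u \text{ an ancestor of } v\}$. A string $Y\in\mathrm{Substr}(\mathsf{T}_b)$ is left-maximal on $\mathsf{T}_b$ if either there are distinct characters $a\ne b$ with $aY,bY\in\mathrm{Substr}(\mathsf{T}_b)$, or $Y=\mathrm{str}_b(\ell,u)$ for some leaf $\ell$; it is right-maximal on $\mathsf{T}_b$ if either there are distinct $a\ne b$ with $Ya,Yb\in\mathrm{Substr}(\mathsf{T}_b)$, or $Y=\mathrm{str}_b(v,r)$ for some node $v$; it is maximal if it is both. For $Y\in\mathrm{Substr}(\mathsf{T}_b)$ let $\mathrm{mx}_b(Y)$ be the shortest maximal string on $\mathsf{T}_b$ of the form $\gamma Y\delta$ with $\gamma,\delta\in\Sigma^*$. Two substrings $Y,Y'$ are equivalent iff $\mathrm{mx}_b(Y)=\mathrm{mx}_b(Y')$.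 $\mathsf{CDAWG}(\mathsf{T}_b)$ is the edge-labeled DAG whose nodes are these equivalence classes; for each class $C$ with representative $M=\mathrm{mx}_b(Y)$ ($Y\in C$) and each character $a$ with $Ma\in\mathrm{Substr}(\mathsf{T}_b)$ there is exactly one edge leaving $C$ whose label begins with $a$ (it leads to the class of $Ma$ and is labeled $a\beta$, where $Ma\beta$ is the shortest right-maximal string on $\mathsf{T}_b$ having $Ma$ as a prefix), and there are no other edges. *)

theory Defs
  imports Main
begin

text \<open>A forward trie on node set V with root r: every non-root node v has parent
  par v (the value of par at the root is irrelevant) and the edge (par v, v)
  carries label lab v.  The backward trie has the same nodes/labels with edges
  reversed.\<close>

definition is_trie :: "'v set \<Rightarrow> 'v \<Rightarrow> ('v \<Rightarrow> 'v) \<Rightarrow> ('v \<Rightarrow> 'c) \<Rightarrow> bool" where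
  "is_trie V r par lab \<longleftrightarrow>
     finite V \<and> r \<in> V \<and>
     (\<forall>v\<in>V. v \<noteq> r \<longrightarrow> par v \<in> V) \<and>
     (\<forall>v\<in>V. \<exists>k. (par ^^ k) v = r) \<and>
     (\<forall>v\<in>V. \<forall>w\<in>V. v \<noteq> r \<and> w \<noteq> r \<and> v \<noteq> w \<and> par v = par w \<longrightarrow> lab v \<noteq> lab w)"

definition up_ok :: "'v \<Rightarrow> ('v \<Rightarrow> 'v) \<Rightarrow> 'v \<Rightarrow> nat \<Rightarrow> bool" where
  "up_ok r par v k \<longleftrightarrow> (\<forall>i<k. (par ^^ i) v \<noteq> r)"

text \<open>str_b(v, (par^^k) v): labels read on the upward path of length k from v.\<close>
definition str_b :: "('v \<Rightarrow> 'v) \<Rightarrow> ('v \<Rightarrow> 'c) \<Rightarrow> 'v \<Rightarrow> nat \<Rightarrow> 'c list" where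
  "str_b par lab v k = map (\<lambda>i. lab ((par ^^ i) v)) [0..<k]"

definition Substr_b :: "'v set \<Rightarrow> 'v \<Rightarrow> ('v \<Rightarrow> 'v) \<Rightarrow> ('v \<Rightarrow> 'c) \<Rightarrow> 'c list set" where
  "Substr_b V r par lab = {str_b par lab v k | v k. v \<in> V \<and> up_ok r par v k}"

definition is_leaf :: "'v set \<Rightarrow> 'v \<Rightarrow> ('v \<Rightarrow> 'v) \<Rightarrow> 'v \<Rightarrow> bool" where
  "is_leaf V r par l \<longleftrightarrow> l \<in> V \<and> \<not> (\<exists>w\<in>V. w \<noteq> r \<and> par w = l)"

definition left_max :: "'v set \<Rightarrow> 'v \<Rightarrow> ('v \<Rightarrow> 'v) \<Rightarrow> ('v \<Rightarrow> 'c) \<Rightarrow> 'c list \<Rightarrow> bool" where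
  "left_max V r par lab Y \<longleftrightarrow> Y \<in> Substr_b V r par lab \<and>
     ((\<exists>a b. a \<noteq> b \<and> a # Y \<in> Substr_b V r par lab \<and> b # Y \<in> Substr_b V r par lab) \<or>
      (\<exists>l k. is_leaf V r par l \<and> up_ok r par l k \<and> Y = str_b par lab l k))"

definition right_max :: "'v set \<Rightarrow> 'v \<Rightarrow> ('v \<Rightarrow> 'v) \<Rightarrow> ('v \<Rightarrow> 'c) \<Rightarrow> 'c list \<Rightarrow> bool" where
  "right_max V r par lab Y \<longleftrightarrow> Y \<in> Substr_b V r par lab \<and>
     ((\<exists>a b. a \<noteq> b \<and> Y @ [a] \<in> Substr_b V r par lab \<and> Y @ [b] \<in> Substr_b V r par lab) \<or>
      (\<exists>v k. v \<in> V \<and> up_ok r par v k \<and> (par ^^ k) v = r \<and> Y = str_b par lab v k))"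

definition maximal_b :: "'v set \<Rightarrow> 'v \<Rightarrow> ('v \<Rightarrow> 'v) \<Rightarrow> ('v \<Rightarrow> 'c) \<Rightarrow> 'c list \<Rightarrow> bool" where
  "maximal_b V r par lab Y \<longleftrightarrow> left_max V r par lab Y \<and> right_max V r par lab Y"

definition is_factor :: "'c list \<Rightarrow> 'c list \<Rightarrow> bool" where
  "is_factor Y M \<longleftrightarrow> (\<exists>\<gamma> \<delta>. M = \<gamma> @ Y @ \<delta>)"

definition mx_b :: "'v set \<Rightarrow> 'v \<Rightarrow> ('v \<Rightarrow> 'v) \<Rightarrow> ('v \<Rightarrow> 'c) \<Rightarrow> 'c list \<Rightarrow> 'c list" where
  "mx_b V r par lab Y = (SOME M. maximal_b V r par lab M \<and> is_factor Y M \<and>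
      (\<forall>M'. maximal_b V r par lab M' \<and> is_factor Y M' \<longrightarrow> length M \<le> length M'))"

definition cdawg_nodes :: "'v set \<Rightarrow> 'v \<Rightarrow> ('v \<Rightarrow> 'v) \<Rightarrow> ('v \<Rightarrow> 'c) \<Rightarrow> 'c list set set" where
  "cdawg_nodes V r par lab =
     Substr_b V r par lab // {(Y, Y'). Y \<in> Substr_b V r par lab \<and> Y' \<in> Substr_b V r par lab \<and>
                               mx_b V r par lab Y = mx_b V r par lab Y'}"

definition class_of :: "'v set \<Rightarrow> 'v \<Rightarrow> ('v \<Rightarrow> 'v) \<Rightarrow> ('v \<Rightarrow> 'c) \<Rightarrow> 'c list \<Rightarrow> 'c list set" where
  "class_of V r par lab Y = {Y' \<in> Substr_b V r par lab. mx_b V r par lab Y' = mx_b V r par lab Y}"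

definition rep :: "'v set \<Rightarrow> 'v \<Rightarrow> ('v \<Rightarrow> 'v) \<Rightarrow> ('v \<Rightarrow> 'c) \<Rightarrow> 'c list set \<Rightarrow> 'c list" where
  "rep V r par lab C = mx_b V r par lab (SOME Y. Y \<in> C)"

definition ext_b :: "'v set \<Rightarrow> 'v \<Rightarrow> ('v \<Rightarrow> 'v) \<Rightarrow> ('v \<Rightarrow> 'c) \<Rightarrow> 'c list \<Rightarrow> 'c list" where
  "ext_b V r par lab X = (SOME \<beta>. right_max V r par lab (X @ \<beta>) \<and>
      (\<forall>\<beta>'. right_max V r par lab (X @ \<beta>') \<longrightarrow> length \<beta> \<le> length \<beta>'))"

definition cdawg_edges :: "'v set \<Rightarrow> 'v \<Rightarrow> ('v \<Rightarrow> 'v) \<Rightarrow> ('v \<Rightarrow> 'c) \<Rightarrow>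
    ('c list set \<times> 'c list \<times> 'c list set) set" where
  "cdawg_edges V r par lab =
     {(C, a # ext_b V r par lab (rep V r par lab C @ [a]),
          class_of V r par lab (rep V r par lab C @ [a])) | C a.
        C \<in> cdawg_nodes V r par lab \<and> rep V r par lab C @ [a] \<in> Substr_b V r par lab}"

end

theory Submission
  imports Defs
begin

text \<open>Both counts are bounded via right-maximal strings.  A CDAWG node is determined by its
  representative, which is maximal and in particular right-maximal; an edge is determined by its
  source and first character, i.e. by a pair (Y, a) with Y right-maximal and Ya a substring.
  Mapping such a pair to Ya followed by its shortest right-maximal extension is injective, since
  no right-maximal string lies strictly between Y and that image, and never yields the empty
  string; so there are fewer pairs than right-maximal strings.  A right-maximal string that is not
  a root string str_b(v, r) has at least two pairs, and with at least three nodes the root strings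
  contribute two more.  As there are at most n root strings, the number m of right-maximal strings
  satisfies 2 (m - n) + 2 \<le> m - 1, i.e. m \<le> 2n - 3, and there are at most m - 1 \<le> 2n - 4 pairs.\<close>

lemma up_ok_Suc: "up_ok r par w (Suc k) \<longleftrightarrow> w \<noteq> r \<and> up_ok r par (par w) k"
  unfolding up_ok_def by (auto simp: less_Suc_eq_0_disj funpow_Suc_right simp del: funpow.simps)

lemma up_ok_mono: "up_ok r par v k \<Longrightarrow> j \<le> k \<Longrightarrow> up_ok r par v j"
  unfolding up_ok_def by auto

lemma up_ok_le: "(par ^^ K) v = r \<Longrightarrow> up_ok r par v k \<Longrightarrow> k \<le> K"
  unfolding up_ok_def using not_le by metis

lemma str_b_Suc: "str_b par lab w (Suc k) = lab w # str_b par lab (par w) k"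
  unfolding str_b_def
  by (simp add: upt_conv_Cons map_Suc_upt[symmetric] funpow_Suc_right del: upt_Suc funpow.simps)

lemma str_b_take: "k \<le> K \<Longrightarrow> str_b par lab v k = take k (str_b par lab v K)"
  unfolding str_b_def by (simp add: take_map take_upt)

lemma someI_least_nat:
  fixes m :: "'a \<Rightarrow> nat"
  assumes "P k"
  shows "P (SOME x. P x \<and> (\<forall>y. P y \<longrightarrow> m x \<le> m y))"
    and "P y \<Longrightarrow> m (SOME x. P x \<and> (\<forall>y. P y \<longrightarrow> m x \<le> m y)) \<le> m y"
  using someI_ex[OF ex_has_least_nat[where P = P and m = m, OF assms]] by blast+

lemma is_factor_append: "is_factor Y (Y @ \<delta>)"
  unfolding is_factor_def by (metis append_Nil)

lemma is_factor_Cons: "is_factor Y X \<Longrightarrow> is_factor Y (a # X)"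
  unfolding is_factor_def by (metis Cons_eq_appendI)

section \<open>Depth and root strings\<close>

locale backward_trie =
  fixes V :: "'v set" and r :: 'v and par :: "'v \<Rightarrow> 'v" and lab :: "'v \<Rightarrow> 'c"
  assumes is_trie: "is_trie V r par lab"
begin

abbreviation substrs :: "'c list set" where
  "substrs \<equiv> Substr_b V r par lab"

abbreviation right_maxs :: "'c list set" where
  "right_maxs \<equiv> {Y. right_max V r par lab Y}"

lemma finite_V: "finite V" and root_in_V: "r \<in> V"
  and par_in_V: "v \<in> V \<Longrightarrow> v \<noteq> r \<Longrightarrow> par v \<in> V"
  and reaches_root: "v \<in> V \<Longrightarrow> \<exists>k. (par ^^ k) v = r"
  and sibling_labels_distinct:
    "\<lbrakk>v \<in> V; w \<in> V; v \<noteq> r; w \<noteq> r; v \<noteq> w; par v = par w\<rbrakk> \<Longrightarrow> lab v \<noteq> lab w"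
  using is_trie unfolding is_trie_def by blast+

lemma funpow_par_in_V: "v \<in> V \<Longrightarrow> up_ok r par v k \<Longrightarrow> (par ^^ k) v \<in> V"
proof (induction k)
  case (Suc k)
  have "up_ok r par v k" using Suc.prems(2) by (rule up_ok_mono) simp
  moreover have "(par ^^ k) v \<noteq> r" using Suc.prems unfolding up_ok_def by simp
  ultimately show ?case using Suc par_in_V by simp
qed simp

lemma str_b_in_substrs: "v \<in> V \<Longrightarrow> up_ok r par v k \<Longrightarrow> str_b par lab v k \<in> substrs"
  unfolding Substr_b_def by blast

definition depth :: "'v \<Rightarrow> nat" where
  "depth v = (LEAST k. (par ^^ k) v = r)"

lemma funpow_depth: "v \<in> V \<Longrightarrow> (par ^^ depth v) v = r"
  unfolding depth_def using reaches_root by (rule LeastI_ex)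

lemma up_ok_depth: "up_ok r par v (depth v)"
  unfolding up_ok_def depth_def using not_less_Least by blast

lemma up_ok_le_depth: "v \<in> V \<Longrightarrow> up_ok r par v k \<Longrightarrow> k \<le> depth v"
  by (erule up_ok_le[OF funpow_depth])

lemma depth_unique: "up_ok r par v k \<Longrightarrow> (par ^^ k) v = r \<Longrightarrow> depth v = k"
  unfolding depth_def by (rule Least_equality) (auto intro: up_ok_le)

lemma depth_child: "w \<in> V \<Longrightarrow> w \<noteq> r \<Longrightarrow> depth w = Suc (depth (par w))"
  by (rule depth_unique)
    (simp_all add: up_ok_Suc up_ok_depth funpow_depth par_in_V funpow_Suc_right del: funpow.simps)

lemma finite_substrs: "finite substrs"
proof (rule finite_subset)
  show "substrs \<subseteq> (\<lambda>(v, k). str_b par lab v k) ` (SIGMA v:V. {..depth v})"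
  proof
    fix Y assume "Y \<in> substrs"
    then obtain v k where "v \<in> V" "up_ok r par v k" "Y = str_b par lab v k"
      unfolding Substr_b_def by blast
    then show "Y \<in> (\<lambda>(v, k). str_b par lab v k) ` (SIGMA v:V. {..depth v})"
      using up_ok_le_depth by fastforce
  qed
  show "finite ((\<lambda>(v, k). str_b par lab v k) ` (SIGMA v:V. {..depth v}))"
    using finite_V by blast
qed

lemma finite_right_maxs: "finite right_maxs"
  using finite_substrs unfolding right_max_def by (simp add: finite_subset)

definition root_strs :: "'c list set" where
  "root_strs = (\<lambda>v. str_b par lab v (depth v)) ` V"

lemma card_root_strs: "card root_strs \<le> card V"
  unfolding root_strs_def using finite_V by (rule card_image_le)

lemma root_strs_right_max: "root_strs \<subseteq> right_maxs"
  unfolding root_strs_def right_max_def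
  using str_b_in_substrs up_ok_depth funpow_depth by blast

lemma root_strs_substrs: "root_strs \<subseteq> substrs"
  using root_strs_right_max unfolding right_max_def by blast

lemma nil_in_root_strs: "[] \<in> root_strs"
proof -
  have "depth r = 0" by (rule depth_unique) (simp_all add: up_ok_def)
  then show ?thesis unfolding root_strs_def str_b_def using root_in_V by force
qed

lemma right_max_branching:
  assumes "right_max V r par lab Y" and "Y \<notin> root_strs"
  shows "\<exists>a b. a \<noteq> b \<and> Y @ [a] \<in> substrs \<and> Y @ [b] \<in> substrs"
  using assms depth_unique unfolding right_max_def root_strs_def by force

lemma prefix_of_root_str: "Y \<in> substrs \<Longrightarrow> \<exists>X\<in>root_strs. \<exists>\<delta>. X = Y @ \<delta>"
proof -
  assume "Y \<in> substrs"
  then obtain v k where v: "v \<in> V" "up_ok r par v k" "Y = str_b par lab v k"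
    unfolding Substr_b_def by blast
  then have "Y = take k (str_b par lab v (depth v))"
    using str_b_take[OF up_ok_le_depth[OF v(1,2)]] v(3) by simp
  then have "str_b par lab v (depth v) = Y @ drop k (str_b par lab v (depth v))"
    by (metis append_take_drop_id)
  then show ?thesis unfolding root_strs_def using v(1) by blast
qed

lemma nonroot_label_in_substrs: "x \<in> V \<Longrightarrow> x \<noteq> r \<Longrightarrow> [lab x] \<in> substrs"
  using str_b_in_substrs[of x 1] by (simp add: str_b_def up_ok_def)

lemma depth_root_child: "u \<in> V \<Longrightarrow> u \<noteq> r \<Longrightarrow> par u = r \<Longrightarrow> depth u = 1"
  by (rule depth_unique) (simp_all add: up_ok_def)

lemma root_child_label_in_root_strs: "u \<in> V \<Longrightarrow> u \<noteq> r \<Longrightarrow> par u = r \<Longrightarrow> [lab u] \<in> root_strs"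
  unfolding root_strs_def using depth_root_child by (force simp: str_b_def)

lemma root_child_exists:
  assumes "v \<in> V" "v \<noteq> r"
  obtains u where "u \<in> V" "u \<noteq> r" "par u = r"
proof -
  obtain j where j: "depth v = Suc j"
    using assms funpow_depth[OF assms(1)] by (cases "depth v") auto
  let ?u = "(par ^^ j) v"
  have "up_ok r par v j" using up_ok_depth[of v] by (rule up_ok_mono) (simp add: j)
  with assms(1) have "?u \<in> V" by (rule funpow_par_in_V)
  moreover have "?u \<noteq> r" using up_ok_depth[of v] j unfolding up_ok_def by simp
  moreover have "par ?u = r" using funpow_depth[OF assms(1)] j by simp
  ultimately show ?thesis by (rule that)
qed

section \<open>Maximal strings and shortest right-maximal extensions\<close>

lemma maximal_superstring_exists:
  assumes "Y \<in> substrs"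
  shows "\<exists>M. maximal_b V r par lab M \<and> is_factor Y M"
proof -
  define U where "U = {u \<in> V. is_factor Y (str_b par lab u (depth u))}"
  obtain u0 \<delta> where "u0 \<in> V" "str_b par lab u0 (depth u0) = Y @ \<delta>"
    using prefix_of_root_str[OF assms] unfolding root_strs_def by blast
  then have "u0 \<in> U" unfolding U_def using is_factor_append by simp
  moreover have "finite U" unfolding U_def using finite_V by simp
  ultimately have "Max (depth ` U) \<in> depth ` U" by (intro Max_in) auto
  then obtain u where u: "u \<in> U" and u_max: "Max (depth ` U) = depth u" by (rule imageE)
  have deepest: "depth w \<le> depth u" if "w \<in> U" for w
    unfolding u_max[symmetric] using \<open>finite U\<close> that by (intro Max_ge) auto
  have leaf: "is_leaf V r par u"
  proof (rule ccontr)
    assume "\<not> is_leaf V r par u"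
    then obtain w where w: "w \<in> V" "w \<noteq> r" "par w = u" using u unfolding U_def is_leaf_def by blast
    then have "str_b par lab w (depth w) = lab w # str_b par lab u (depth u)"
      by (simp add: depth_child str_b_Suc)
    then have "w \<in> U" using w(1) u is_factor_Cons unfolding U_def by auto
    then show False using deepest[of w] depth_child[OF w(1,2)] w(3) by simp
  qed
  let ?X = "str_b par lab u (depth u)"
  have "?X \<in> root_strs" using u unfolding U_def root_strs_def by blast
  then have "right_max V r par lab ?X" "?X \<in> substrs"
    using root_strs_right_max root_strs_substrs by blast+
  moreover have "left_max V r par lab ?X"
    unfolding left_max_def using \<open>?X \<in> substrs\<close> leaf up_ok_depth by blast
  ultimately show ?thesis using u unfolding maximal_b_def U_def by blast
qed

lemma mx_b_maximal:
  assumes "Y \<in> substrs"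
  shows "maximal_b V r par lab (mx_b V r par lab Y)"
proof -
  obtain M where "maximal_b V r par lab M \<and> is_factor Y M"
    using maximal_superstring_exists[OF assms] by blast
  from someI_least_nat(1)[where P = "\<lambda>M. maximal_b V r par lab M \<and> is_factor Y M" and m = length,
      OF this]
  show ?thesis
    unfolding mx_b_def conj_assoc by blast
qed

lemma mx_b_right_max: "Y \<in> substrs \<Longrightarrow> mx_b V r par lab Y \<in> right_maxs"
  using mx_b_maximal unfolding maximal_b_def by blast

lemma ext_b_least:
  assumes "X \<in> substrs"
  shows "right_max V r par lab (X @ ext_b V r par lab X)"
    and "right_max V r par lab (X @ \<beta>) \<Longrightarrow> length (ext_b V r par lab X) \<le> length \<beta>"
proof -
  obtain \<delta> where "right_max V r par lab (X @ \<delta>)"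
    using prefix_of_root_str[OF assms] root_strs_right_max by blast
  from someI_least_nat[where P = "\<lambda>\<beta>. right_max V r par lab (X @ \<beta>)" and m = length, OF this]
  show "right_max V r par lab (X @ ext_b V r par lab X)"
    and "right_max V r par lab (X @ \<beta>) \<Longrightarrow> length (ext_b V r par lab X) \<le> length \<beta>"
    unfolding ext_b_def by blast+
qed

section \<open>Counting right-maximal strings\<close>

definition succ_chars :: "'c list \<Rightarrow> 'c set" where
  "succ_chars Y = {a. Y @ [a] \<in> substrs}"

definition right_exts :: "('c list \<times> 'c) set" where
  "right_exts = (SIGMA Y:right_maxs. succ_chars Y)"

lemma finite_succ_chars: "finite (succ_chars Y)"
proof -
  have "succ_chars Y = (\<lambda>a. Y @ [a]) -` substrs" unfolding succ_chars_def by auto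
  moreover have "inj (\<lambda>a. Y @ [a])" by (simp add: inj_def)
  ultimately show ?thesis using finite_vimageI[OF finite_substrs] by simp
qed

lemma finite_right_exts: "finite right_exts"
  unfolding right_exts_def using finite_right_maxs finite_succ_chars by blast

lemma card_succ_chars_branching:
  assumes "right_max V r par lab Y" "Y \<notin> root_strs"
  shows "2 \<le> card (succ_chars Y)"
proof -
  obtain a b where "a \<noteq> b" "a \<in> succ_chars Y" "b \<in> succ_chars Y"
    using right_max_branching[OF assms] unfolding succ_chars_def by blast
  then have "card {a, b} \<le> card (succ_chars Y)" by (intro card_mono finite_succ_chars) auto
  with \<open>a \<noteq> b\<close> show ?thesis by simp
qed

definition edge_str :: "'c list \<times> 'c \<Rightarrow> 'c list" where
  "edge_str = (\<lambda>(Y, a). Y @ [a] @ ext_b V r par lab (Y @ [a]))"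

lemma right_max_prefix_of_edge_str:
  assumes "Y @ [a] \<in> substrs" "length Y < k" "right_max V r par lab (take k (edge_str (Y, a)))"
  shows "length (edge_str (Y, a)) \<le> k"
proof -
  let ?\<beta> = "ext_b V r par lab (Y @ [a])"
  have "take k (edge_str (Y, a)) = Y @ [a] @ take (k - Suc (length Y)) ?\<beta>"
    using assms(2) by (simp add: edge_str_def take_Cons')
  with assms(3) have "right_max V r par lab ((Y @ [a]) @ take (k - Suc (length Y)) ?\<beta>)" by simp
  from ext_b_least(2)[OF assms(1) this] have "length ?\<beta> \<le> length (take (k - Suc (length Y)) ?\<beta>)" .
  then show ?thesis using assms(2) by (simp add: edge_str_def)
qed

lemma inj_on_edge_str: "inj_on edge_str right_exts"
proof (rule inj_onI)
  have not_shorter: "\<not> length Y < length Y'"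
    if "(Y, a) \<in> right_exts" "(Y', a') \<in> right_exts" "edge_str (Y, a) = edge_str (Y', a')"
    for Y a Y' a'
  proof
    assume shorter: "length Y < length Y'"
    have "Y' = take (length Y') (edge_str (Y, a))"
      using that(3) by (simp add: edge_str_def)
    then have "length (edge_str (Y, a)) \<le> length Y'"
      using right_max_prefix_of_edge_str[OF _ shorter] that(1,2)
      by (simp add: right_exts_def succ_chars_def)
    moreover have "length Y' < length (edge_str (Y', a'))" by (simp add: edge_str_def)
    ultimately show False using that(3) by simp
  qed
  fix p q assume p: "p \<in> right_exts" and q: "q \<in> right_exts" and eq: "edge_str p = edge_str q"
  obtain Y a Y' a' where pq: "p = (Y, a)" "q = (Y', a')" by fastforce
  have "length Y = length Y'"
    using not_shorter p q eq unfolding pq by (metis linorder_neqE_nat)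
  with eq show "p = q" unfolding pq edge_str_def by (simp add: append_eq_append_conv)
qed

lemma edge_str_in_right_maxs: "edge_str ` right_exts \<subseteq> right_maxs - {[]}"
  unfolding right_exts_def succ_chars_def edge_str_def using ext_b_least(1) by fastforce

lemma card_right_exts_less: "card right_exts < card right_maxs"
proof -
  have "card right_exts = card (edge_str ` right_exts)"
    using inj_on_edge_str by (simp add: card_image)
  also have "\<dots> < card right_maxs"
  proof (rule psubset_card_mono[OF finite_right_maxs])
    have "[] \<in> right_maxs" using nil_in_root_strs root_strs_right_max by blast
    then show "edge_str ` right_exts \<subset> right_maxs" using edge_str_in_right_maxs by blast
  qed
  finally show ?thesis .
qed

lemma card_root_exts:
  assumes "3 \<le> card V"
  shows "2 \<le> card (SIGMA Y:root_strs. succ_chars Y)"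
proof -
  obtain v w where vw: "v \<in> V" "w \<in> V" "v \<noteq> r" "w \<noteq> r" "v \<noteq> w"
    using card_le_Suc0_iff_eq[of "V - {r}"] assms finite_V root_in_V by auto
  have "\<exists>p q. p \<noteq> q \<and> {p, q} \<subseteq> (SIGMA Y:root_strs. succ_chars Y)"
  proof (cases "\<exists>x\<in>V - {r}. \<exists>y\<in>V - {r}. lab x \<noteq> lab y")
    case True
    then obtain x y where "x \<in> V - {r}" "y \<in> V - {r}" "lab x \<noteq> lab y" by blast
    then show ?thesis
      using nil_in_root_strs nonroot_label_in_substrs unfolding succ_chars_def
      by (intro exI[of _ "([], lab x)"] exI[of _ "([], lab y)"]) auto
  next
    case False
    then have same_label: "lab x = lab v" if "x \<in> V" "x \<noteq> r" for x
      using that vw by blast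
    have "par v \<noteq> r \<or> par w \<noteq> r"
      using sibling_labels_distinct[OF vw] same_label[OF vw(2,4)] by auto
    then obtain x where x: "x \<in> V" "x \<noteq> r" "par x \<noteq> r" using vw by blast
    then have "str_b par lab x 2 \<in> substrs"
      by (intro str_b_in_substrs) (auto simp: up_ok_def numeral_2_eq_2 less_Suc_eq)
    then have "[lab v] @ [lab v] \<in> substrs"
      using x par_in_V same_label by (simp add: str_b_def numeral_2_eq_2)
    moreover obtain u where "u \<in> V" "u \<noteq> r" "par u = r" using x(1,2) by (rule root_child_exists)
    then have "[lab v] \<in> root_strs" using root_child_label_in_root_strs same_label by metis
    ultimately show ?thesis
      using nil_in_root_strs nonroot_label_in_substrs[OF vw(1,3)] unfolding succ_chars_def
      by (intro exI[of _ "([], lab v)"] exI[of _ "([lab v], lab v)"]) auto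
  qed
  moreover have "finite (SIGMA Y:root_strs. succ_chars Y)"
    using finite_right_maxs root_strs_right_max finite_succ_chars
    by (intro finite_SigmaI) (auto intro: finite_subset)
  ultimately show ?thesis by (metis card_2_iff card_mono)
qed

lemma card_right_maxs:
  assumes "3 \<le> card V"
  shows "card right_maxs + 3 \<le> 2 * card V"
proof -
  let ?B = "right_maxs - root_strs"
  have finite_B: "finite ?B" using finite_right_maxs by simp
  have split: "right_exts = (SIGMA Y:?B. succ_chars Y) \<union> (SIGMA Y:root_strs. succ_chars Y)"
    unfolding right_exts_def using root_strs_right_max by blast
  have "card right_exts = card (SIGMA Y:?B. succ_chars Y) + card (SIGMA Y:root_strs. succ_chars Y)"
    using finite_right_exts unfolding split by (intro card_Un_disjoint) auto
  moreover have "card (SIGMA Y:?B. succ_chars Y) = (\<Sum>Y\<in>?B. card (succ_chars Y))"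
    using finite_B finite_succ_chars by simp
  moreover have "(\<Sum>Y\<in>?B. 2) \<le> (\<Sum>Y\<in>?B. card (succ_chars Y))"
    using card_succ_chars_branching by (intro sum_mono) auto
  moreover have "card right_maxs = card ?B + card root_strs"
    using finite_right_maxs root_strs_right_max
    by (metis card_Diff_subset card_mono le_add_diff_inverse2 finite_subset)
  ultimately show ?thesis
    using card_root_exts[OF assms] card_right_exts_less card_root_strs by simp
qed

section \<open>The CDAWG\<close>

lemma cdawg_node_eq_class:
  assumes "C \<in> cdawg_nodes V r par lab"
  obtains Y where "Y \<in> substrs" "C = {Y' \<in> substrs. mx_b V r par lab Y = mx_b V r par lab Y'}"
    and "rep V r par lab C = mx_b V r par lab Y"
proof -
  obtain Y where Y: "Y \<in> substrs"
    and C: "C = {Y' \<in> substrs. mx_b V r par lab Y = mx_b V r par lab Y'}"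
    using assms unfolding cdawg_nodes_def by (auto elim!: quotientE)
  then have "(SOME Y. Y \<in> C) \<in> C" by (intro someI) simp
  then have "rep V r par lab C = mx_b V r par lab Y" unfolding rep_def C by simp
  with Y C show ?thesis by (rule that)
qed

lemma rep_right_max: "C \<in> cdawg_nodes V r par lab \<Longrightarrow> rep V r par lab C \<in> right_maxs"
  by (metis cdawg_node_eq_class mx_b_right_max)

lemma inj_on_rep: "inj_on (rep V r par lab) (cdawg_nodes V r par lab)"
proof (rule inj_onI)
  fix C C' assume "C \<in> cdawg_nodes V r par lab" "C' \<in> cdawg_nodes V r par lab"
    and "rep V r par lab C = rep V r par lab C'"
  then show "C = C'" by (elim cdawg_node_eq_class) simp
qed

lemma card_cdawg_nodes: "card (cdawg_nodes V r par lab) \<le> card right_maxs"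
  using card_inj_on_le[OF inj_on_rep _ finite_right_maxs] rep_right_max by blast

lemma card_cdawg_edges: "card (cdawg_edges V r par lab) \<le> card right_exts"
proof -
  define N where "N = {(C, a). C \<in> cdawg_nodes V r par lab \<and> rep V r par lab C @ [a] \<in> substrs}"
  define h :: "'c list set \<times> 'c \<Rightarrow> 'c list \<times> 'c" where "h = (\<lambda>(C, a). (rep V r par lab C, a))"
  have inj_h: "inj_on h N" unfolding h_def N_def using inj_on_rep by (auto simp: inj_on_def)
  have h_N: "h ` N \<subseteq> right_exts"
    unfolding h_def N_def right_exts_def succ_chars_def using rep_right_max by auto
  have finite_N: "finite N"
    using finite_subset[OF h_N finite_right_exts] inj_h by (rule finite_imageD)
  have "cdawg_edges V r par lab \<subseteq> (\<lambda>(C, a). (C, a # ext_b V r par lab (rep V r par lab C @ [a]),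
      class_of V r par lab (rep V r par lab C @ [a]))) ` N"
    unfolding cdawg_edges_def N_def by auto
  then have "card (cdawg_edges V r par lab) \<le> card N"
    using finite_N by (rule surj_card_le[rotated])
  also have "\<dots> \<le> card right_exts" using card_inj_on_le[OF inj_h h_N finite_right_exts] .
  finally show ?thesis .
qed

end

theorem theorem8:
  fixes V :: "'v set" and r :: 'v and par :: "'v \<Rightarrow> 'v" and lab :: "'v \<Rightarrow> 'c" and n :: nat
  assumes "is_trie V r par lab"
    and "card V = n"
    and "n \<ge> 3"
  shows "card (cdawg_nodes V r par lab) \<le> 2 * n - 3
       \<and> card (cdawg_edges V r par lab) \<le> 2 * n - 4"
proof -
  interpret backward_trie V r par lab using assms(1) by unfold_locales
  have "card right_maxs + 3 \<le> 2 * n" using card_right_maxs assms(2,3) by simp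
  then show ?thesis using card_cdawg_nodes card_cdawg_edges card_right_exts_less by linarith
qed

end
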